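(* On $M=(0,\infty)$ with $g_R=dx^2$, let $I_k=[2^{-(k+1)},2^{-k}]$ for $k=0,1,2,\dots$ and let $f:(0,\infty)\to\mathbb R$ be any smooth function with $|f|<1$ everywhere such that $f\equiv 2^{-(4k+1)}-1$ on $I_{4k}$ and $f\equiv 1-2^{-(4k+3)}$ on $I_{4k+2}$ for all $k\ge0$. Then the Randers metric $R$ with Zermelo data $(dx^2,\,f\partial_x)$ is forward and backward geodesically complete, although $g_R$ is incomplete.
   Context: The Randers metric with Zermelo data $(g_R,W)$, $|W|_R<1$, is the Finsler metric $R(v)=\dfrac{|v|_R^2}{g_R(W,v)+\sqrt{(1-|W|_R^2)|v|_R^2+g_R(W,v)^2}}$, whose unit sphere at $p$ is the translate by $W_p$ of the $g_R$-unit sphere. Forward (resp. backward) completeness means every inextendible geodesic is defined on an interval unbounded above (resp. below). *)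

theory Defs
  imports "HOL-Analysis.Analysis"
begin

definition smooth_on_real :: "real set \<Rightarrow> (real \<Rightarrow> real) \<Rightarrow> bool" where
  "smooth_on_real S f \<longleftrightarrow> (\<forall>n. \<forall>x\<in>S. ((deriv ^^ n) f) differentiable (at x))"

text \<open>Manifold M = (0,infinity) with g_R = dx^2; a tangent vector at x is a real v
  (v times d/dx), so |v|_R^2 = v^2 and g_R(W,v) = W x * v for W = W x d/dx.
  Randers metric with Zermelo data (dx^2, W):\<close>
definition randers :: "(real \<Rightarrow> real) \<Rightarrow> real \<Rightarrow> real \<Rightarrow> real" where
  "randers W x v = v^2 / (W x * v + sqrt ((1 - (W x)^2) * v^2 + (W x * v)^2))"

definition energy :: "(real \<Rightarrow> real) \<Rightarrow> real \<Rightarrow> real \<Rightarrow> real" where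
  "energy W x v = (randers W x v)^2 / 2"

definition open_interval :: "real set \<Rightarrow> bool" where
  "open_interval J \<longleftrightarrow> is_interval J \<and> open J \<and> J \<noteq> {}"

definition randers_geodesic :: "(real \<Rightarrow> real) \<Rightarrow> real set \<Rightarrow> (real \<Rightarrow> real) \<Rightarrow> bool" where
  "randers_geodesic W J \<gamma> \<longleftrightarrow> open_interval J \<and> (\<forall>t\<in>J. \<gamma> t > 0) \<and>
     ((\<exists>c. \<forall>t\<in>J. \<gamma> t = c) \<or>
      (\<forall>t\<in>J. \<gamma> differentiable (at t) \<and> deriv \<gamma> t \<noteq> 0 \<and>
         (\<lambda>w. energy W (\<gamma> t) w) differentiable (at (deriv \<gamma> t)) \<and>
         (\<lambda>y. energy W y (deriv \<gamma> t)) differentiable (at (\<gamma> t)) \<and>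
         ((\<lambda>s. deriv (\<lambda>w. energy W (\<gamma> s) w) (deriv \<gamma> s))
            has_real_derivative deriv (\<lambda>y. energy W y (deriv \<gamma> t)) (\<gamma> t)) (at t)))"

definition inextendible_geodesic :: "(real \<Rightarrow> real) \<Rightarrow> real set \<Rightarrow> (real \<Rightarrow> real) \<Rightarrow> bool" where
  "inextendible_geodesic W J \<gamma> \<longleftrightarrow> randers_geodesic W J \<gamma> \<and>
     \<not> (\<exists>J' \<delta>. J \<subset> J' \<and> randers_geodesic W J' \<delta> \<and> (\<forall>t\<in>J. \<delta> t = \<gamma> t))"

definition forward_complete :: "(real \<Rightarrow> real) \<Rightarrow> bool" where
  "forward_complete W \<longleftrightarrow>
     (\<forall>J \<gamma>. inextendible_geodesic W J \<gamma> \<longrightarrow> (\<forall>a. \<exists>t\<in>J. t > a))"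

definition backward_complete :: "(real \<Rightarrow> real) \<Rightarrow> bool" where
  "backward_complete W \<longleftrightarrow>
     (\<forall>J \<gamma>. inextendible_geodesic W J \<gamma> \<longrightarrow> (\<forall>a. \<exists>t\<in>J. t < a))"

end

theory Submission
  imports Defs
begin

text \<open>For \<open>v \<noteq> 0\<close> the Randers norm is \<open>|v| / (1 + sgn v \<cdot> f)\<close>, so along a regular curve
  moving in direction \<open>\<sigma> = \<plusminus>1\<close> the Euler-Lagrange equation is the conservation law
  \<open>\<gamma>' = c (1 + \<sigma> f(\<gamma>))\<close>; its solutions are \<open>\<gamma>(t) = F\<^sup>-\<^sup>1(c t + d)\<close> with
  \<open>F' = 1 / (1 + \<sigma> f)\<close>. As \<open>|f| < 1\<close>, \<open>F' > 1/2\<close> and \<open>F \<rightarrow> \<infinity>\<close> at \<open>\<infinity>\<close>. Near \<open>0\<close>, on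
  \<open>I\<^sub>4\<^sub>k\<close> (for \<open>\<sigma> = 1\<close>) resp. \<open>I\<^sub>4\<^sub>k\<^sub>+\<^sub>2\<close> (for \<open>\<sigma> = -1\<close>) the wind nearly cancels the
  motion and \<open>F\<close> grows by exactly \<open>1\<close> across the interval, so \<open>F \<rightarrow> -\<infinity>\<close> at \<open>0\<close>.
  Hence \<open>F\<close> is a diffeomorphism onto \<open>\<real>\<close> and every geodesic extends to all times, although
  \<open>(0, \<infinity>)\<close> with \<open>dx\<^sup>2\<close> is incomplete.\<close>

lemma randers_eq_abs_div:
  assumes "v \<noteq> 0"
  shows "randers W y v = \<bar>v\<bar> / (1 + sgn v * W y)"
proof -
  have sqrt_eq: "sqrt ((1 - (W y)^2) * v^2 + (W y * v)^2) = \<bar>v\<bar>"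
    by (simp add: algebra_simps power_mult_distrib)
  show ?thesis
  proof (cases "v > 0")
    case True
    have "v^2 / (W y * v + \<bar>v\<bar>) = v * v / (v * (1 + W y))"
      using True by (simp add: power2_eq_square algebra_simps)
    then show ?thesis
      unfolding randers_def sqrt_eq using True by simp
  next
    case False
    with assms have "v < 0" by auto
    have "v^2 / (W y * v + \<bar>v\<bar>) = (-v) * (-v) / ((-v) * (1 - W y))"
      using \<open>v < 0\<close> by (simp add: power2_eq_square algebra_simps)
    then show ?thesis
      unfolding randers_def sqrt_eq using \<open>v < 0\<close> by simp
  qed
qed

lemma energy_eq:
  assumes "v \<noteq> 0"
  shows "energy W y v = v^2 / (2 * (1 + sgn v * W y)^2)"
  unfolding energy_def randers_eq_abs_div[OF assms] by (simp add: power_divide)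

lemma energy_has_derivative_velocity:
  assumes "v \<noteq> 0"
  shows "((\<lambda>w. energy W x w) has_real_derivative v / (1 + sgn v * W x)^2) (at v)"
proof -
  define C where "C = 2 * (1 + sgn v * W x)^2"
  have "eventually (\<lambda>w. w \<noteq> 0 \<and> sgn w = sgn v) (nhds v)"
  proof (cases "v > 0")
    case True
    have "eventually (\<lambda>w. w \<in> {0<..}) (nhds v)"
      using True by (intro eventually_nhds_in_open) auto
    then show ?thesis by eventually_elim (use True in auto)
  next
    case False
    with assms have "v < 0" by auto
    have "eventually (\<lambda>w. w \<in> {..<0}) (nhds v)"
      using \<open>v < 0\<close> by (intro eventually_nhds_in_open) auto
    then show ?thesis by eventually_elim (use \<open>v < 0\<close> in auto)
  qed
  then have local_eq: "eventually (\<lambda>w. energy W x w = w^2 / C) (nhds v)"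
    by eventually_elim (simp add: energy_eq C_def)
  have "((\<lambda>w. w^2 / C) has_real_derivative 2 * v / C) (at v)"
    using DERIV_cdivide[OF DERIV_power[OF DERIV_ident, of 2 v], where c=C] by simp
  then show ?thesis
    using DERIV_cong_ev[OF refl local_eq refl] by (simp add: C_def)
qed

lemma energy_has_derivative_position:
  assumes "v \<noteq> 0" and "(W has_real_derivative W') (at y)" and "1 + sgn v * W y \<noteq> 0"
  shows "((\<lambda>y. energy W y v) has_real_derivative
           - (v^2 * sgn v * W') / (1 + sgn v * W y)^3) (at y)"
proof -
  define A where "A y = 1 + sgn v * W y" for y
  have "(A has_real_derivative sgn v * W') (at y)"
    unfolding A_def using assms(2) by (auto intro!: derivative_eq_intros)
  then have "((\<lambda>y. v^2 / (2 * (A y)^2)) has_real_derivative - (v^2 * sgn v * W') / (A y)^3) (at y)"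
    using assms(3) unfolding A_def[symmetric]
    by (auto intro!: derivative_eq_intros simp: field_simps power2_eq_square power3_eq_cube)
  then show ?thesis
    using energy_eq[OF assms(1)] by (simp add: A_def)
qed

lemma connected_nonvanishing_sgn_eq:
  fixes P :: "real \<Rightarrow> real"
  assumes "connected S" "continuous_on S P" "\<And>s. s \<in> S \<Longrightarrow> P s \<noteq> 0"
    and "s \<in> S" "t \<in> S"
  shows "sgn (P s) = sgn (P t)"
proof (rule ccontr)
  assume "sgn (P s) \<noteq> sgn (P t)"
  then have "min (P s) (P t) \<le> 0 \<and> 0 \<le> max (P s) (P t)"
    using assms(3-5) by (auto simp: sgn_if split: if_splits)
  moreover have "connected (P ` S)"
    using connected_continuous_image[OF assms(2,1)] .
  ultimately have "0 \<in> P ` S"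
    unfolding connected_iff_interval using assms(4,5)
    by (metis image_eqI max_def min_def)
  then show False using assms(3) by auto
qed

lemma nonconstant_randers_geodesicD:
  assumes "randers_geodesic W J \<gamma>" "\<not> (\<exists>c. \<forall>t\<in>J. \<gamma> t = c)" "t \<in> J"
  shows "(\<gamma> has_real_derivative deriv \<gamma> t) (at t)" and "deriv \<gamma> t \<noteq> 0"
    and "((\<lambda>s. deriv (\<lambda>w. energy W (\<gamma> s) w) (deriv \<gamma> s))
           has_real_derivative deriv (\<lambda>y. energy W y (deriv \<gamma> t)) (\<gamma> t)) (at t)"
  using assms by (auto simp: randers_geodesic_def DERIV_deriv_iff_real_differentiable)

lemma nonconstant_randers_geodesic_sgn_const:
  fixes f \<gamma> :: "real \<Rightarrow> real"
  assumes bound: "\<And>x. x > 0 \<Longrightarrow> \<bar>f x\<bar> < 1"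
    and geo: "randers_geodesic f J \<gamma>" and nonconst: "\<not> (\<exists>c. \<forall>t\<in>J. \<gamma> t = c)"
  obtains \<sigma> where "\<sigma> = 1 \<or> \<sigma> = -1" and "\<And>t. t \<in> J \<Longrightarrow> sgn (deriv \<gamma> t) = \<sigma>"
proof -
  have J: "open_interval J" and pos: "\<And>t. t \<in> J \<Longrightarrow> \<gamma> t > 0"
    using geo by (auto simp: randers_geodesic_def)
  define u where "u = deriv \<gamma>"
  define P where "P s = deriv (\<lambda>w. energy f (\<gamma> s) w) (u s)" for s
  have u_ne: "\<And>t. t \<in> J \<Longrightarrow> u t \<noteq> 0"
    and Pd: "\<And>t. t \<in> J \<Longrightarrow> P differentiable (at t)"
    using nonconstant_randers_geodesicD[OF geo nonconst]
    unfolding u_def P_def real_differentiable_def by blast+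
  have denom_pos: "1 + sgn (u s) * f (\<gamma> s) > 0" if "s \<in> J" for s
    using bound[OF pos[OF that]] u_ne[OF that] by (auto simp: abs_less_iff sgn_if)
  have P_eq: "P s = u s / (1 + sgn (u s) * f (\<gamma> s))^2" if "s \<in> J" for s
    unfolding P_def by (rule DERIV_imp_deriv[OF energy_has_derivative_velocity[OF u_ne[OF that]]])
  obtain t0 where t0: "t0 \<in> J" using J by (auto simp: open_interval_def)
  have "sgn (u s) = sgn (u t0)" if "s \<in> J" for s
  proof -
    have "connected J" using J by (simp add: open_interval_def is_interval_connected)
    then have "sgn (P s) = sgn (P t0)"
    proof (rule connected_nonvanishing_sgn_eq[OF _ _ _ that t0])
      show "continuous_on J P"
        using Pd differentiable_imp_continuous_within by (blast intro: continuous_at_imp_continuous_on)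
      show "P s \<noteq> 0" if "s \<in> J" for s
        using P_eq[OF that] u_ne[OF that] denom_pos[OF that] by simp
    qed
    then show ?thesis
      using P_eq[OF that] P_eq[OF t0] denom_pos[OF that] denom_pos[OF t0]
      by (simp add: sgn_divide power_sgn)
  qed
  moreover have "sgn (u t0) = 1 \<or> sgn (u t0) = -1" using u_ne[OF t0] by (auto simp: sgn_if)
  ultimately show ?thesis using that unfolding u_def by blast
qed

text \<open>Along a geodesic moving in direction \<open>\<sigma>\<close> the momentum is \<open>\<gamma>' / h\<^sup>2\<close> with
  \<open>h = 1 + \<sigma> f(\<gamma>)\<close>, and the Euler-Lagrange equation says exactly that \<open>\<gamma>' / h\<close> is constant.\<close>
lemma randers_geodesic_ode:
  fixes f \<gamma> :: "real \<Rightarrow> real"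
  assumes fd: "\<And>x. x > 0 \<Longrightarrow> (f has_real_derivative deriv f x) (at x)"
    and bound: "\<And>x. x > 0 \<Longrightarrow> \<bar>f x\<bar> < 1"
    and geo: "randers_geodesic f J \<gamma>" and nonconst: "\<not> (\<exists>c. \<forall>t\<in>J. \<gamma> t = c)"
  obtains \<sigma> c where "\<sigma> = 1 \<or> \<sigma> = -1" and "\<sigma> * c > 0"
    and "\<And>t. t \<in> J \<Longrightarrow> (\<gamma> has_real_derivative c * (1 + \<sigma> * f (\<gamma> t))) (at t)"
proof -
  have J: "open_interval J" and pos: "\<And>t. t \<in> J \<Longrightarrow> \<gamma> t > 0"
    using geo by (auto simp: randers_geodesic_def)
  have conv: "convex J" using J by (simp add: open_interval_def is_interval_convex)
  obtain \<sigma> where \<sigma>: "\<sigma> = 1 \<or> \<sigma> = -1" and sgn_u: "\<And>t. t \<in> J \<Longrightarrow> sgn (deriv \<gamma> t) = \<sigma>"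
    using nonconstant_randers_geodesic_sgn_const[OF bound geo nonconst] by blast
  define u where "u = deriv \<gamma>"
  define P where "P s = deriv (\<lambda>w. energy f (\<gamma> s) w) (u s)" for s
  define h where "h s = 1 + \<sigma> * f (\<gamma> s)" for s
  have ud: "\<And>t. t \<in> J \<Longrightarrow> (\<gamma> has_real_derivative u t) (at t)"
    and u_ne: "\<And>t. t \<in> J \<Longrightarrow> u t \<noteq> 0"
    and Pd: "\<And>t. t \<in> J \<Longrightarrow> (P has_real_derivative deriv (\<lambda>y. energy f y (u t)) (\<gamma> t)) (at t)"
    using nonconstant_randers_geodesicD[OF geo nonconst] unfolding u_def P_def by blast+
  have h_pos: "h s > 0" if "s \<in> J" for s
    using bound[OF pos[OF that]] \<sigma> by (auto simp: h_def abs_less_iff)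
  have P_h: "P s = u s / (h s)^2" if "s \<in> J" for s
    using DERIV_imp_deriv[OF energy_has_derivative_velocity[OF u_ne[OF that]]] sgn_u[OF that]
    by (simp add: P_def h_def u_def)
  have conserved: "((\<lambda>s. P s * h s) has_real_derivative 0) (at t within J)" if t: "t \<in> J" for t
  proof -
    have hd: "(h has_real_derivative \<sigma> * (deriv f (\<gamma> t) * u t)) (at t)"
      unfolding h_def using DERIV_chain2[OF fd[OF pos[OF t]] ud[OF t]]
      by (auto intro!: derivative_eq_intros)
    have force: "deriv (\<lambda>y. energy f y (u t)) (\<gamma> t) = - ((u t)^2 * \<sigma> * deriv f (\<gamma> t)) / (h t)^3"
      using DERIV_imp_deriv[OF energy_has_derivative_position[OF u_ne[OF t] fd[OF pos[OF t]]]]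
        h_pos[OF t] sgn_u[OF t] by (simp add: h_def u_def)
    have "deriv (\<lambda>y. energy f y (u t)) (\<gamma> t) * h t + \<sigma> * (deriv f (\<gamma> t) * u t) * P t = 0"
      using h_pos[OF t] unfolding force P_h[OF t]
      by (simp add: field_simps power2_eq_square power3_eq_cube)
    then show ?thesis
      using DERIV_mult[OF Pd[OF t] hd] by (simp add: has_field_derivative_at_within)
  qed
  obtain k where k: "\<And>s. s \<in> J \<Longrightarrow> P s * h s = k"
    using has_field_derivative_zero_constant[OF conv conserved] by blast
  have u_eq: "u s = k * h s" if "s \<in> J" for s
    using k[OF that] h_pos[OF that] unfolding P_h[OF that]
    by (simp add: field_simps power2_eq_square)
  obtain t0 where t0: "t0 \<in> J" using J by (auto simp: open_interval_def)
  have "\<sigma> * k > 0"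
    using u_eq[OF t0] h_pos[OF t0] sgn_u[OF t0] \<sigma>
    by (auto simp: u_def sgn_if zero_less_mult_iff split: if_splits)
  then show ?thesis
    using that[OF \<sigma>] ud u_eq by (simp add: h_def)
qed

lemma randers_geodesic_of_ode:
  fixes f \<delta> :: "real \<Rightarrow> real"
  assumes fd: "\<And>x. x > 0 \<Longrightarrow> (f has_real_derivative deriv f x) (at x)"
    and bound: "\<And>x. x > 0 \<Longrightarrow> \<bar>f x\<bar> < 1"
    and \<sigma>: "\<sigma> = 1 \<or> \<sigma> = -1" and c: "\<sigma> * c > 0"
    and J: "open_interval J" and pos: "\<And>t. t \<in> J \<Longrightarrow> \<delta> t > 0"
    and ode: "\<And>t. t \<in> J \<Longrightarrow> (\<delta> has_real_derivative c * (1 + \<sigma> * f (\<delta> t))) (at t)"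
  shows "randers_geodesic f J \<delta>"
proof -
  define h where "h s = 1 + \<sigma> * f (\<delta> s)" for s
  have h_pos: "h s > 0" if "s \<in> J" for s
    using bound[OF pos[OF that]] \<sigma> by (auto simp: h_def abs_less_iff)
  have u: "deriv \<delta> s = c * h s" if "s \<in> J" for s
    using DERIV_imp_deriv[OF ode[OF that]] by (simp add: h_def)
  have sgn_u: "sgn (deriv \<delta> s) = \<sigma>" if "s \<in> J" for s
    using u[OF that] h_pos[OF that] \<sigma> c by (auto simp: sgn_mult sgn_if zero_less_mult_iff)
  have u_ne: "deriv \<delta> s \<noteq> 0" if "s \<in> J" for s
    using u[OF that] h_pos[OF that] c by auto
  have momentum: "deriv (\<lambda>w. energy f (\<delta> s) w) (deriv \<delta> s) = c / h s" if "s \<in> J" for s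
    using DERIV_imp_deriv[OF energy_has_derivative_velocity[OF u_ne[OF that]]] h_pos[OF that]
    by (simp add: u[OF that] sgn_u[OF that, unfolded u[OF that]] h_def[symmetric] power2_eq_square)
  show ?thesis unfolding randers_geodesic_def
  proof (intro conjI disjI2 ballI J pos)
    fix t assume t: "t \<in> J"
    show "\<delta> differentiable at t" "deriv \<delta> t \<noteq> 0"
      using ode[OF t] u_ne[OF t] real_differentiable_def by blast+
    show "(\<lambda>w. energy f (\<delta> t) w) differentiable at (deriv \<delta> t)"
      using energy_has_derivative_velocity[OF u_ne[OF t]] real_differentiable_def by blast
    have force_d: "((\<lambda>y. energy f y (deriv \<delta> t)) has_real_derivative
        - ((deriv \<delta> t)^2 * \<sigma> * deriv f (\<delta> t)) / (h t)^3) (at (\<delta> t))"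
      using energy_has_derivative_position[OF u_ne[OF t] fd[OF pos[OF t]]] h_pos[OF t]
      by (simp add: sgn_u[OF t] h_def)
    then show "(\<lambda>y. energy f y (deriv \<delta> t)) differentiable at (\<delta> t)"
      using real_differentiable_def by blast
    have hd: "(h has_real_derivative \<sigma> * (deriv f (\<delta> t) * (c * h t))) (at t)"
      unfolding h_def using DERIV_chain2[OF fd[OF pos[OF t]] ode[OF t]]
      by (auto intro!: derivative_eq_intros)
    have "((\<lambda>s. c / h s) has_real_derivative - ((deriv \<delta> t)^2 * \<sigma> * deriv f (\<delta> t)) / (h t)^3) (at t)"
      using DERIV_divide[OF DERIV_const[of c] hd] h_pos[OF t]
      by (simp add: u[OF t] field_simps power2_eq_square power3_eq_cube)
    moreover have ev: "eventually (\<lambda>s. deriv (\<lambda>w. energy f (\<delta> s) w) (deriv \<delta> s) = c / h s) (nhds t)"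
      using J t unfolding open_interval_def
      by (metis (mono_tags, lifting) eventually_nhds_in_open eventually_mono momentum)
    ultimately show "((\<lambda>s. deriv (\<lambda>w. energy f (\<delta> s) w) (deriv \<delta> s)) has_real_derivative
        deriv (\<lambda>y. energy f y (deriv \<delta> t)) (\<delta> t)) (at t)"
      using DERIV_cong_ev[OF refl ev refl] DERIV_imp_deriv[OF force_d] by simp
  qed
qed

lemma exists_antiderivative_on_pos:
  fixes g :: "real \<Rightarrow> real"
  assumes "\<And>x. x > 0 \<Longrightarrow> isCont g x"
  obtains F where "\<And>x. x > 0 \<Longrightarrow> (F has_real_derivative g x) (at x)"
  using einterval_antiderivative[of 0 \<infinity> g] assms
  by (auto simp: has_real_derivative_iff_has_vector_derivative)

lemma antiderivative_surj_if_unbounded_below: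
  fixes F g :: "real \<Rightarrow> real"
  assumes Fd: "\<And>x. x > 0 \<Longrightarrow> (F has_real_derivative g x) (at x)"
    and g_ge: "\<And>x. x > 0 \<Longrightarrow> g x \<ge> m" and "m > 0"
    and unbounded_below: "\<And>r. \<exists>x>0. F x < r"
  shows "\<exists>x>0. F x = r"
proof -
  obtain a where a: "a > 0" "F a < r" using unbounded_below by blast
  define b where "b = max a (2 + \<bar>r - F 1\<bar> / m)"
  have "F 1 - m * 1 \<le> F b - m * b"
  proof (rule DERIV_nonneg_imp_nondecreasing[where f="\<lambda>x. F x - m * x"])
    show "1 \<le> b" using \<open>m > 0\<close> by (simp add: b_def le_max_iff_disj)
    fix z assume "1 \<le> z" "z \<le> b"
    then show "\<exists>y. ((\<lambda>x. F x - m * x) has_real_derivative y) (at z) \<and> 0 \<le> y"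
      using g_ge[of z] Fd[of z]
      by (intro exI[of _ "g z - m"]) (auto intro!: derivative_eq_intros)
  qed
  moreover have "\<bar>r - F 1\<bar> < m * b - m"
    using \<open>m > 0\<close> by (simp add: b_def field_simps max_def)
  ultimately have "r < F b" by linarith
  moreover have "continuous_on {a..b} F"
    using a DERIV_isCont[OF Fd] by (intro continuous_at_imp_continuous_on) auto
  moreover have "a \<le> b" by (simp add: b_def)
  ultimately obtain x where "a \<le> x" "F x = r"
    using IVT'[of F a r b] a by auto
  then show ?thesis using a by (intro exI[of _ x]) auto
qed

lemma antiderivative_inverse:
  fixes F g :: "real \<Rightarrow> real"
  assumes Fd: "\<And>x. x > 0 \<Longrightarrow> (F has_real_derivative g x) (at x)"
    and g_ge: "\<And>x. x > 0 \<Longrightarrow> g x \<ge> m" and "m > 0"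
    and unbounded_below: "\<And>r. \<exists>x>0. F x < r"
  obtains G where "\<And>t. G t > 0" and "\<And>x. x > 0 \<Longrightarrow> G (F x) = x"
    and "\<And>t. (G has_real_derivative inverse (g (G t))) (at t)"
proof -
  have mono: "F x < F y" if "0 < x" "x < y" for x y
  proof (rule DERIV_pos_imp_increasing[OF that(2)])
    fix z assume "x \<le> z" "z \<le> y"
    then show "\<exists>y. (F has_real_derivative y) (at z) \<and> 0 < y"
      using that Fd[of z] g_ge[of z] \<open>m > 0\<close> by force
  qed
  have inj: "x = y" if "x > 0" "y > 0" "F x = F y" for x y
    using mono[of x y] mono[of y x] that by (cases x y rule: linorder_cases) auto
  define G where "G t = (SOME x. x > 0 \<and> F x = t)" for t
  have G: "G t > 0 \<and> F (G t) = t" for t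
    unfolding G_def
    by (rule someI_ex) (rule antiderivative_surj_if_unbounded_below[OF Fd g_ge \<open>m > 0\<close> unbounded_below])
  have GF: "G (F x) = x" if "x > 0" for x
    using inj[of "G (F x)" x] G[of "F x"] that by auto
  have near_pos: "z > 0" if "\<bar>z - G t\<bar> \<le> G t / 2" for z t
    using that G[of t] by (simp add: abs_if split: if_splits)
  have "isCont G t" for t
  proof -
    have "isCont G (F (G t))"
    proof (rule isCont_inverse_function[where f=F and x="G t" and d="G t / 2"])
      show "0 < G t / 2" using G[of t] by simp
      show "G (F z) = z" if "\<bar>z - G t\<bar> \<le> G t / 2" for z
        using GF near_pos[OF that] by blast
      show "isCont F z" if "\<bar>z - G t\<bar> \<le> G t / 2" for z
        using DERIV_isCont[OF Fd[OF near_pos[OF that]]] .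
    qed
    then show ?thesis using G[of t] by simp
  qed
  then have "(G has_real_derivative inverse (g (G t))) (at t)" for t
    using G[of t] Fd[of "G t"] g_ge[of "G t"] \<open>m > 0\<close>
    by (intro DERIV_inverse_function[where a="t - 1" and b="t + 1"]) (auto simp: G)
  with that G GF show ?thesis by blast
qed

lemma antiderivative_unbounded_below_if_blocks:
  fixes F g :: "real \<Rightarrow> real"
  assumes Fd: "\<And>x. x > 0 \<Longrightarrow> (F has_real_derivative g x) (at x)"
    and g_nonneg: "\<And>x. x > 0 \<Longrightarrow> g x \<ge> 0"
    and blocks: "\<And>\<epsilon>. \<epsilon> > 0 \<Longrightarrow> \<exists>lo>0. 2 * lo \<le> \<epsilon> \<and> (\<forall>z\<in>{lo..2*lo}. g z = 1 / lo)"
  shows "\<exists>x>0. F x < r"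
proof -
  have mono: "F a \<le> F b" if "0 < a" "a \<le> b" for a b
    using that Fd g_nonneg
    by (intro DERIV_nonneg_imp_nondecreasing[OF that(2)]) (metis less_le_trans)
  have drop: "\<exists>y>0. F y \<le> F x - 1" if x: "x > 0" for x
  proof -
    obtain lo where lo: "lo > 0" "2 * lo \<le> x" "\<forall>z\<in>{lo..2*lo}. g z = 1 / lo"
      using blocks[OF x] by blast
    have "\<exists>z>lo. z < 2 * lo \<and> F (2 * lo) - F lo = (2 * lo - lo) * g z"
      using lo(1) Fd by (intro MVT2) auto
    then have "F (2 * lo) - F lo = 1" using lo by auto
    moreover have "F (2 * lo) \<le> F x" using mono lo by simp
    ultimately show ?thesis using lo by (intro exI[of _ lo]) auto
  qed
  have descent: "\<exists>x>0. F x \<le> F 1 - real n" for n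
  proof (induction n)
    case 0
    show ?case by (intro exI[of _ 1]) simp
  next
    case (Suc n)
    then obtain x where "x > 0" "F x \<le> F 1 - real n" by blast
    moreover obtain y where "y > 0" "F y \<le> F x - 1" using drop[OF \<open>x > 0\<close>] by blast
    ultimately show ?case by (intro exI[of _ y]) auto
  qed
  obtain n :: nat where n: "F 1 - r < real n" using reals_Archimedean2 by blast
  obtain x where "x > 0" "F x \<le> F 1 - real n" using descent by blast
  then show ?thesis using n by (intro exI[of _ x]) auto
qed

lemma randers_ode_solution_extends:
  fixes f \<gamma> :: "real \<Rightarrow> real"
  assumes fd: "\<And>x. x > 0 \<Longrightarrow> (f has_real_derivative deriv f x) (at x)"
    and bound: "\<And>x. x > 0 \<Longrightarrow> \<bar>f x\<bar> < 1"
    and \<sigma>: "\<sigma> = 1 \<or> \<sigma> = -1" and c: "\<sigma> * c > 0"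
    and slow: "\<And>F r. (\<And>x. x > 0 \<Longrightarrow> (F has_real_derivative 1 / (1 + \<sigma> * f x)) (at x))
                  \<Longrightarrow> \<exists>x>0. F x < r"
    and J: "open_interval J" and pos: "\<And>t. t \<in> J \<Longrightarrow> \<gamma> t > 0"
    and ode: "\<And>t. t \<in> J \<Longrightarrow> (\<gamma> has_real_derivative c * (1 + \<sigma> * f (\<gamma> t))) (at t)"
  obtains \<delta> where "randers_geodesic f UNIV \<delta>" and "\<And>t. t \<in> J \<Longrightarrow> \<delta> t = \<gamma> t"
proof -
  define g where "g x = 1 / (1 + \<sigma> * f x)" for x
  have denom: "0 < 1 + \<sigma> * f x" "1 + \<sigma> * f x < 2" if "x > 0" for x
    using bound[OF that] \<sigma> by (auto simp: abs_less_iff)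
  have "isCont g x" if "x > 0" for x
    using DERIV_isCont[OF fd[OF that]] denom[OF that] unfolding g_def
    by (auto intro!: continuous_intros)
  then obtain F where Fd: "\<And>x. x > 0 \<Longrightarrow> (F has_real_derivative g x) (at x)"
    using exists_antiderivative_on_pos by blast
  have g_ge: "g x \<ge> 1/2" if "x > 0" for x
    using denom[OF that] by (simp add: g_def field_simps)
  have half: "(0::real) < 1/2" by simp
  have unbounded: "\<exists>x>0. F x < r" for r
    using slow[OF Fd[unfolded g_def]] .
  obtain G where G_pos: "\<And>t. G t > 0" and GF: "\<And>x. x > 0 \<Longrightarrow> G (F x) = x"
    and Gd: "\<And>t. (G has_real_derivative inverse (g (G t))) (at t)"
    using antiderivative_inverse[OF Fd g_ge half unbounded] by auto
  have conv: "convex J" using J by (simp add: open_interval_def is_interval_convex)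
  have const: "((\<lambda>t. F (\<gamma> t) - c * t) has_real_derivative 0) (at t within J)" if t: "t \<in> J" for t
  proof -
    have eq: "g (\<gamma> t) * (c * (1 + \<sigma> * f (\<gamma> t))) - c * 1 = 0"
      using denom[OF pos[OF t]] by (simp add: g_def)
    have "((\<lambda>t. F (\<gamma> t) - c * t) has_real_derivative
            g (\<gamma> t) * (c * (1 + \<sigma> * f (\<gamma> t))) - c * 1) (at t)"
      by (rule DERIV_diff[OF DERIV_chain2[OF Fd[OF pos[OF t]] ode[OF t]] DERIV_cmult[OF DERIV_ident]])
    from this[unfolded eq] show ?thesis
      by (rule has_field_derivative_at_within)
  qed
  obtain d where d: "\<And>t. t \<in> J \<Longrightarrow> F (\<gamma> t) - c * t = d"
    using has_field_derivative_zero_constant[OF conv const] by blast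
  define \<delta> where "\<delta> t = G (c * t + d)" for t
  have \<delta>_pos: "\<delta> t > 0" for t by (simp add: \<delta>_def G_pos)
  have \<delta>_ode: "(\<delta> has_real_derivative c * (1 + \<sigma> * f (\<delta> t))) (at t)" for t
  proof -
    have "(\<delta> has_real_derivative inverse (g (\<delta> t)) * (c * 1 + 0)) (at t)"
      unfolding \<delta>_def
      by (rule DERIV_chain2[OF Gd DERIV_add[OF DERIV_cmult[OF DERIV_ident] DERIV_const]])
    then show ?thesis
      using denom[OF G_pos[of "c * t + d"]] by (simp add: g_def \<delta>_def mult.commute)
  qed
  have "open_interval (UNIV :: real set)" by (simp add: open_interval_def)
  then have "randers_geodesic f UNIV \<delta>"
    using randers_geodesic_of_ode[OF fd bound \<sigma> c _ \<delta>_pos \<delta>_ode] by blast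
  moreover have "\<delta> t = \<gamma> t" if "t \<in> J" for t
    using d[OF that] GF[OF pos[OF that]] by (simp add: \<delta>_def algebra_simps)
  ultimately show ?thesis using that by blast
qed

lemma inextendible_randers_geodesic_UNIV:
  fixes f :: "real \<Rightarrow> real"
  assumes fd: "\<And>x. x > 0 \<Longrightarrow> (f has_real_derivative deriv f x) (at x)"
    and bound: "\<And>x. x > 0 \<Longrightarrow> \<bar>f x\<bar> < 1"
    and slow: "\<And>\<sigma> F r. \<sigma> = 1 \<or> \<sigma> = -1 \<Longrightarrow>
                 (\<And>x. x > 0 \<Longrightarrow> (F has_real_derivative 1 / (1 + \<sigma> * f x)) (at x)) \<Longrightarrow>
                 \<exists>x>0. F x < r"
    and inext: "inextendible_geodesic f J \<gamma>"
  shows "J = UNIV"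
proof (rule ccontr)
  assume "J \<noteq> UNIV"
  then have proper: "J \<subset> UNIV" by blast
  have geo: "randers_geodesic f J \<gamma>"
    and maximal: "\<And>\<delta>. randers_geodesic f UNIV \<delta> \<Longrightarrow> \<exists>t\<in>J. \<delta> t \<noteq> \<gamma> t"
    using inext proper by (auto simp: inextendible_geodesic_def)
  have J: "open_interval J" and pos: "\<And>t. t \<in> J \<Longrightarrow> \<gamma> t > 0"
    using geo by (auto simp: randers_geodesic_def)
  show False
  proof (cases "\<exists>c. \<forall>t\<in>J. \<gamma> t = c")
    case True
    then obtain c where c: "\<And>t. t \<in> J \<Longrightarrow> \<gamma> t = c" by blast
    obtain t0 where "t0 \<in> J" using J by (auto simp: open_interval_def)
    then have "c > 0" using pos c by fastforce
    then have "randers_geodesic f UNIV (\<lambda>_. c)"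
      by (simp add: randers_geodesic_def open_interval_def)
    then show False using maximal c by fastforce
  next
    case False
    then obtain \<sigma> c where \<sigma>: "\<sigma> = 1 \<or> \<sigma> = -1" and c: "\<sigma> * c > 0"
      and ode: "\<And>t. t \<in> J \<Longrightarrow> (\<gamma> has_real_derivative c * (1 + \<sigma> * f (\<gamma> t))) (at t)"
      using randers_geodesic_ode[OF fd bound geo] by blast
    obtain \<delta> where "randers_geodesic f UNIV \<delta>" "\<And>t. t \<in> J \<Longrightarrow> \<delta> t = \<gamma> t"
      using randers_ode_solution_extends[OF fd bound \<sigma> c slow[OF \<sigma>] J pos ode] by auto
    then show False using maximal by blast
  qed
qed

lemma not_complete_greaterThan: "\<not> complete {a::real<..}"
proof
  assume "complete {a<..}"
  then have "closed {a<..}" by (rule complete_imp_closed)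
  then have "a \<in> {a<..}"
    using closure_greaterThan[of a] closure_closed by fastforce
  then show False by simp
qed

lemma wind_constant_blocks:
  fixes f :: "real \<Rightarrow> real"
  assumes on_I4k: "\<forall>k::nat. \<forall>x \<in> {(1/2) ^ (4*k+1) .. (1/2) ^ (4*k)}.
                     f x = (1/2::real) ^ (4*k+1) - 1"
    and on_I4k2: "\<forall>k::nat. \<forall>x \<in> {(1/2) ^ (4*k+3) .. (1/2) ^ (4*k+2)}.
                     f x = 1 - (1/2::real) ^ (4*k+3)"
    and \<sigma>: "\<sigma> = 1 \<or> \<sigma> = -1" and "\<epsilon> > 0"
  shows "\<exists>lo>0. 2 * lo \<le> \<epsilon> \<and> (\<forall>z\<in>{lo..2*lo}. 1 / (1 + \<sigma> * f z) = 1 / lo)"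
proof -
  obtain k :: nat where "(1/2::real) ^ k < \<epsilon>"
    using real_arch_pow_inv[OF \<open>\<epsilon> > 0\<close>, of "1/2"] by auto
  moreover have "(1/2::real) ^ (4*k) \<le> (1/2) ^ k" by (rule power_decreasing) auto
  ultimately have small: "(1/2::real) ^ (4*k) \<le> \<epsilon>" by linarith
  from \<sigma> show ?thesis
  proof
    assume "\<sigma> = 1"
    define lo :: real where "lo = (1/2) ^ (4*k+1)"
    have "2 * lo = (1/2) ^ (4*k)" by (simp add: lo_def)
    then have "\<forall>z\<in>{lo..2*lo}. f z = lo - 1" using on_I4k by (simp add: lo_def)
    then show ?thesis
      using \<open>\<sigma> = 1\<close> \<open>2 * lo = _\<close> small by (intro exI[of _ lo]) (simp add: lo_def)
  next
    assume "\<sigma> = -1"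
    define lo :: real where "lo = (1/2) ^ (4*k+3)"
    have "2 * lo = (1/2) ^ (4*k+2)" by (simp add: lo_def power_add power_divide)
    moreover have "(1/2::real) ^ (4*k+2) \<le> (1/2) ^ (4*k)" by (rule power_decreasing) auto
    ultimately have "2 * lo \<le> \<epsilon>" using small by linarith
    moreover have "\<forall>z\<in>{lo..2*lo}. f z = 1 - lo"
      using on_I4k2 \<open>2 * lo = _\<close> by (simp add: lo_def)
    ultimately show ?thesis
      using \<open>\<sigma> = -1\<close> by (intro exI[of _ lo]) (simp add: lo_def)
  qed
qed

theorem mainTheorem5:
  fixes f :: "real \<Rightarrow> real"
  assumes smooth: "smooth_on_real {0<..} f"
    and bound: "\<forall>x>0. \<bar>f x\<bar> < 1"
    and on_I4k: "\<forall>k::nat. \<forall>x \<in> {(1/2) ^ (4*k+1) .. (1/2) ^ (4*k)}.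
                   f x = (1/2::real) ^ (4*k+1) - 1"
    and on_I4k2: "\<forall>k::nat. \<forall>x \<in> {(1/2) ^ (4*k+3) .. (1/2) ^ (4*k+2)}.
                   f x = 1 - (1/2::real) ^ (4*k+3)"
  shows "forward_complete f \<and> backward_complete f \<and> \<not> complete {0::real<..}"
proof -
  have fd: "(f has_real_derivative deriv f x) (at x)" if "x > 0" for x
    using smooth that unfolding smooth_on_real_def
    by (metis DERIV_deriv_iff_real_differentiable funpow_0 greaterThan_iff)
  have bd: "\<bar>f x\<bar> < 1" if "x > 0" for x using bound that by blast
  have slow: "\<exists>x>0. F x < r"
    if \<sigma>: "\<sigma> = 1 \<or> \<sigma> = -1"
      and Fd: "\<And>x. x > 0 \<Longrightarrow> (F has_real_derivative 1 / (1 + \<sigma> * f x)) (at x)" for \<sigma> F r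
  proof (rule antiderivative_unbounded_below_if_blocks[OF Fd])
    show "1 / (1 + \<sigma> * f x) \<ge> 0" if "x > 0" for x
      using bd[OF that] \<sigma> by (auto simp: abs_less_iff)
    show "\<exists>lo>0. 2 * lo \<le> \<epsilon> \<and> (\<forall>z\<in>{lo..2*lo}. 1 / (1 + \<sigma> * f z) = 1 / lo)" if "\<epsilon> > 0" for \<epsilon>
      by (rule wind_constant_blocks[OF on_I4k on_I4k2 \<sigma> that])
  qed
  have "J = UNIV" if "inextendible_geodesic f J \<gamma>" for J \<gamma>
    using inextendible_randers_geodesic_UNIV[OF fd bd slow that] .
  then have "forward_complete f" "backward_complete f"
    unfolding forward_complete_def backward_complete_def by (metis UNIV_I gt_ex lt_ex)+
  then show ?thesis using not_complete_greaterThan by blast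
qed

end
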